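(* Let $V$ be a finite set of variables, $\mathcal C$ a set of betweenness constraints over $V$, and $\kappa\ge 0$ an integer. Apply the following reduction rule as long as possible: if $\mathcal C$ contains a complete triple of constraints, delete these three constraints from $\mathcal C$ and delete from $V$ every variable that appears only in constraints of that triple. Let $(V',\mathcal C')$ be the resulting instance. Then $(V,\mathcal C)$ (with parameter $\kappa$) is a Yes-instance of Betweenness Above Tight Lower Bound if and only if $(V',\mathcal C')$ (with parameter $\kappa$) is a Yes-instance.
   Context: A betweenness constraint over $V$ is written $(v_i,\{v_j,v_k\})$ with $v_i,v_j,v_k\in V$ distinct, meaning "$v_i$ is between $v_j$ and $v_k$". A bijection $\alpha:V\to\{1,\dots,|V|\}$ (a linear arrangement) satisfies $(v_i,\{v_j,v_k\})$ if $\alpha(v_j)<\alpha(v_i)<\alpha(v_k)$ or $\alpha(v_k)<\alpha(v_i)<\alpha(v_j)$. For a constraint $C$, $vars(C)$ is its set of three variables. Three distinct constraints $A,B,C\in\mathcal C$ form a complete triple if $vars(A)=vars(B)=vars(C)$. Betweenness Above Tight Lower Bound (BATLB): given $V$, $\mathcal C$ and integer $\kappa\ge0$, the instance is a Yes-instance iff there is a bijection $\alpha:V\to\{1,\dots,|V|\}$ satisfying at least $|\mathcal C|/3+\kappa$ constraints of $\mathcal C$. *)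

theory Defs
  imports Complex_Main
begin

text \<open>A betweenness constraint (v_i, {v_j, v_k}) is represented as a pair (v_i, {v_j, v_k}).\<close>
type_synonym 'a betw = "'a \<times> 'a set"

definition is_constraint :: "'a set \<Rightarrow> 'a betw \<Rightarrow> bool" where
  "is_constraint V c \<longleftrightarrow> (\<exists>j k. snd c = {j, k} \<and> fst c \<noteq> j \<and> fst c \<noteq> k \<and> j \<noteq> k
                               \<and> fst c \<in> V \<and> j \<in> V \<and> k \<in> V)"

definition cvars :: "'a betw \<Rightarrow> 'a set" where
  "cvars c = insert (fst c) (snd c)"

definition satisfies :: "('a \<Rightarrow> nat) \<Rightarrow> 'a betw \<Rightarrow> bool" where
  "satisfies \<alpha> c \<longleftrightarrow> (\<exists>j k. snd c = {j, k} \<and>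
      ((\<alpha> j < \<alpha> (fst c) \<and> \<alpha> (fst c) < \<alpha> k) \<or> (\<alpha> k < \<alpha> (fst c) \<and> \<alpha> (fst c) < \<alpha> j)))"

definition batlb_yes :: "'a set \<Rightarrow> 'a betw set \<Rightarrow> int \<Rightarrow> bool" where
  "batlb_yes V C \<kappa> \<longleftrightarrow> (\<exists>\<alpha>. bij_betw \<alpha> V {1..card V} \<and>
      real (card {c \<in> C. satisfies \<alpha> c}) \<ge> real (card C) / 3 + real_of_int \<kappa>)"

definition complete_triple :: "'a betw set \<Rightarrow> 'a betw \<Rightarrow> 'a betw \<Rightarrow> 'a betw \<Rightarrow> bool" where
  "complete_triple C A B D \<longleftrightarrow> A \<in> C \<and> B \<in> C \<and> D \<in> C \<and> A \<noteq> B \<and> A \<noteq> D \<and> B \<noteq> D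
      \<and> cvars A = cvars B \<and> cvars B = cvars D"

definition reduce_step :: "('a set \<times> 'a betw set) \<Rightarrow> ('a set \<times> 'a betw set) \<Rightarrow> bool" where
  "reduce_step I J \<longleftrightarrow> (\<exists>A B D. complete_triple (snd I) A B D \<and>
      J = (fst I - {v \<in> cvars A. \<forall>c \<in> snd I - {A, B, D}. v \<notin> cvars c},
           snd I - {A, B, D}))"

end

theory Submission
  imports Defs
begin

text \<open>A complete triple on variables a, b, c consists of exactly the three constraints
  (a,{b,c}), (b,{a,c}), (c,{a,b}), and any injective arrangement puts exactly one of a, b, c in
  the middle, so it satisfies exactly one of them. Deleting the triple therefore lowers |C| by 3
  and the number of satisfied constraints by exactly 1, which leaves the inequality
  #satisfied \<ge> |C|/3 + \<kappa> unchanged. Variables that only occur in the triple are irrelevant to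
  the remaining constraints: an arrangement of the reduced instance extends to one of the
  original instance, since any injective map into the naturals can be compressed into a
  bijection onto {1..|V|} without changing the relative order of the variables.\<close>

definition meets_bound :: "('a \<Rightarrow> nat) \<Rightarrow> 'a betw set \<Rightarrow> int \<Rightarrow> bool" where
  "meets_bound \<alpha> C \<kappa> \<longleftrightarrow>
     real (card {c \<in> C. satisfies \<alpha> c}) \<ge> real (card C) / 3 + real_of_int \<kappa>"

lemma batlb_yes_iff_bij_betw:
  "batlb_yes V C \<kappa> \<longleftrightarrow> (\<exists>\<alpha>. bij_betw \<alpha> V {1..card V} \<and> meets_bound \<alpha> C \<kappa>)"
  by (simp add: batlb_yes_def meets_bound_def)

lemma satisfies_Pair:
  "satisfies \<alpha> (a, {b, c}) \<longleftrightarrow> \<alpha> b < \<alpha> a \<and> \<alpha> a < \<alpha> c \<or> \<alpha> c < \<alpha> a \<and> \<alpha> a < \<alpha> b"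
  by (auto simp: satisfies_def doubleton_eq_iff)

lemma satisfies_cong:
  assumes "\<forall>x\<in>cvars c. \<forall>y\<in>cvars c. f x < f y \<longleftrightarrow> g x < g y"
  shows "satisfies f c \<longleftrightarrow> satisfies g c"
proof -
  have "fst c \<in> cvars c" "snd c \<subseteq> cvars c"
    by (auto simp: cvars_def)
  then show ?thesis
    using assms unfolding satisfies_def by blast
qed

lemma meets_bound_cong:
  assumes "\<forall>c\<in>C. satisfies \<alpha> c \<longleftrightarrow> satisfies \<beta> c"
  shows "meets_bound \<alpha> C \<kappa> \<longleftrightarrow> meets_bound \<beta> C \<kappa>"
proof -
  have "{c \<in> C. satisfies \<alpha> c} = {c \<in> C. satisfies \<beta> c}"
    using assms by blast
  then show ?thesis
    by (simp add: meets_bound_def)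
qed

lemma cvars_subset_if_is_constraint: "is_constraint V c \<Longrightarrow> cvars c \<subseteq> V"
  unfolding is_constraint_def cvars_def by (metis insert_subset empty_subsetI)

lemma is_constraint_restrict:
  assumes "is_constraint V c" "cvars c \<subseteq> W"
  shows "is_constraint W c"
proof -
  obtain j k where "snd c = {j, k}" "fst c \<noteq> j" "fst c \<noteq> k" "j \<noteq> k"
    using assms(1) unfolding is_constraint_def by blast
  moreover have "fst c \<in> W" "snd c \<subseteq> W"
    using assms(2) by (auto simp: cvars_def)
  ultimately show ?thesis
    unfolding is_constraint_def by blast
qed

lemma finite_constraints:
  assumes "finite V" "\<forall>c\<in>C. is_constraint V c"
  shows "finite C"
proof -
  have "C \<subseteq> V \<times> Pow V"
  proof
    fix c assume "c \<in> C"
    then have "insert (fst c) (snd c) \<subseteq> V"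
      using assms(2) cvars_subset_if_is_constraint unfolding cvars_def by blast
    then show "c \<in> V \<times> Pow V"
      by (cases c) auto
  qed
  then show ?thesis
    using assms(1) by (simp add: finite_subset)
qed

lemma ex_bij_betw_ranking:
  fixes \<alpha> :: "'a \<Rightarrow> 'b::linorder"
  assumes "finite V" "inj_on \<alpha> V"
  shows "\<exists>\<beta>. bij_betw \<beta> V {1..card V} \<and> (\<forall>x\<in>V. \<forall>y\<in>V. \<beta> x < \<beta> y \<longleftrightarrow> \<alpha> x < \<alpha> y)"
proof -
  define \<beta> where "\<beta> x = card {y \<in> V. \<alpha> y < \<alpha> x} + 1" for x
  have strict_mono: "\<beta> x < \<beta> y" if "x \<in> V" "\<alpha> x < \<alpha> y" for x y
  proof -
    have "{z \<in> V. \<alpha> z < \<alpha> x} \<subset> {z \<in> V. \<alpha> z < \<alpha> y}"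
      using that by auto
    then show ?thesis
      using assms(1) by (simp add: \<beta>_def psubset_card_mono)
  qed
  have order: "\<beta> x < \<beta> y \<longleftrightarrow> \<alpha> x < \<alpha> y" if "x \<in> V" "y \<in> V" for x y
  proof
    assume "\<beta> x < \<beta> y"
    moreover have "x \<noteq> y"
      using calculation by blast
    ultimately show "\<alpha> x < \<alpha> y"
      using strict_mono[of y x] inj_onD[OF assms(2)] that by (meson less_asym linorder_neqE)
  qed (use strict_mono that in blast)
  have inj: "inj_on \<beta> V"
  proof (rule inj_onI)
    fix x y assume "x \<in> V" "y \<in> V" "\<beta> x = \<beta> y"
    then show "x = y"
      using order inj_onD[OF assms(2)] by (metis less_irrefl linorder_neqE)
  qed
  have "\<beta> ` V \<subseteq> {1..card V}"
  proof
    fix z assume "z \<in> \<beta> ` V"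
    then obtain x where x: "x \<in> V" "z = \<beta> x" by blast
    have "{y \<in> V. \<alpha> y < \<alpha> x} \<subset> V"
      using x by auto
    then show "z \<in> {1..card V}"
      using psubset_card_mono[OF assms(1)] x by (simp add: \<beta>_def Suc_le_eq)
  qed
  then have "\<beta> ` V = {1..card V}"
    using inj by (simp add: card_subset_eq card_image)
  then show ?thesis
    using inj order by (auto simp: bij_betw_def)
qed

lemma ex_inj_on_extension:
  fixes \<alpha> :: "'a \<Rightarrow> nat"
  assumes "finite V" "W \<subseteq> V" "inj_on \<alpha> W"
  shows "\<exists>\<beta>. inj_on \<beta> V \<and> (\<forall>x\<in>W. \<beta> x = \<alpha> x)"
proof -
  obtain g :: "'a \<Rightarrow> nat" where g: "inj_on g (V - W)"
    using finite_imp_inj_to_nat_seg[of "V - W"] assms(1) by blast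
  define M where "M = Suc (Max (\<alpha> ` W))"
  have below_M: "\<alpha> x < M" if "x \<in> W" for x
    using that assms(1,2) finite_subset by (fastforce simp: M_def less_Suc_eq_le)
  define \<beta> where "\<beta> x = (if x \<in> W then \<alpha> x else M + g x)" for x
  have "inj_on \<beta> W" "inj_on \<beta> (V - W)"
    using assms(3) g by (auto simp: inj_on_def \<beta>_def)
  moreover have "\<beta> ` W \<inter> \<beta> ` (V - W) = {}"
    using below_M by (fastforce simp: \<beta>_def)
  ultimately have "inj_on \<beta> (W \<union> (V - W))"
    unfolding inj_on_Un by auto
  moreover have "W \<union> (V - W) = V"
    using assms(2) by blast
  ultimately show ?thesis
    by (auto simp: \<beta>_def)
qed

lemma batlb_yes_iff_inj_on:
  assumes "finite V" "\<forall>c\<in>C. cvars c \<subseteq> V"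
  shows "batlb_yes V C \<kappa> \<longleftrightarrow> (\<exists>\<alpha>. inj_on \<alpha> V \<and> meets_bound \<alpha> C \<kappa>)"
proof
  assume "batlb_yes V C \<kappa>"
  then show "\<exists>\<alpha>. inj_on \<alpha> V \<and> meets_bound \<alpha> C \<kappa>"
    by (auto simp: batlb_yes_iff_bij_betw bij_betw_def)
next
  assume "\<exists>\<alpha>. inj_on \<alpha> V \<and> meets_bound \<alpha> C \<kappa>"
  then obtain \<alpha> where \<alpha>: "inj_on \<alpha> V" "meets_bound \<alpha> C \<kappa>"
    by blast
  obtain \<beta> where \<beta>: "bij_betw \<beta> V {1..card V}" "\<forall>x\<in>V. \<forall>y\<in>V. \<beta> x < \<beta> y \<longleftrightarrow> \<alpha> x < \<alpha> y"
    using ex_bij_betw_ranking[OF assms(1) \<alpha>(1)] by blast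
  have "satisfies \<beta> c \<longleftrightarrow> satisfies \<alpha> c" if "c \<in> C" for c
    using \<beta>(2) assms(2) that by (intro satisfies_cong) blast
  then show "batlb_yes V C \<kappa>"
    using \<alpha>(2) \<beta>(1) meets_bound_cong[of C \<beta> \<alpha>] by (auto simp: batlb_yes_iff_bij_betw)
qed

lemma is_constraint_cvars_cases:
  assumes "is_constraint V X" "cvars X = {a, b, c}" "a \<noteq> b" "a \<noteq> c" "b \<noteq> c"
  shows "X = (a, {b, c}) \<or> X = (b, {a, c}) \<or> X = (c, {a, b})"
proof -
  obtain x y z where X: "X = (x, {y, z})" "x \<noteq> y" "x \<noteq> z" "y \<noteq> z"
    using assms(1) unfolding is_constraint_def by (metis prod.collapse)
  have vars: "insert x {y, z} = {a, b, c}"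
    using assms(2) X by (simp add: cvars_def)
  then have "x = a \<or> x = b \<or> x = c"
    by blast
  moreover have "{y, z} = {a, b, c} - {x}"
    using vars X by auto
  ultimately show ?thesis
    using X assms(3-5) by (auto simp: insert_Diff_if)
qed

lemma complete_triple_cases:
  assumes "complete_triple C A B D" "is_constraint V A" "is_constraint V B" "is_constraint V D"
  obtains a b c where "a \<noteq> b" "a \<noteq> c" "b \<noteq> c" "{a, b, c} \<subseteq> V"
    "{A, B, D} = {(a, {b, c}), (b, {a, c}), (c, {a, b})}"
proof -
  obtain a b c where A: "A = (a, {b, c})" "a \<noteq> b" "a \<noteq> c" "b \<noteq> c" "{a, b, c} \<subseteq> V"
    using assms(2) unfolding is_constraint_def by (metis prod.collapse empty_subsetI insert_subset)
  have "cvars B = {a, b, c}" "cvars D = {a, b, c}"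
    using assms(1) A(1) unfolding complete_triple_def by (auto simp: cvars_def)
  then have "B = (b, {a, c}) \<or> B = (c, {a, b})" "D = (b, {a, c}) \<or> D = (c, {a, b})"
    using is_constraint_cvars_cases[OF assms(3)] is_constraint_cvars_cases[OF assms(4)] A(1-4)
      assms(1) unfolding complete_triple_def by metis+
  moreover have "B \<noteq> D"
    using assms(1) unfolding complete_triple_def by blast
  ultimately have "{A, B, D} = {(a, {b, c}), (b, {a, c}), (c, {a, b})}"
    using A(1) by auto
  then show ?thesis
    using A(2-5) that by blast
qed

lemma card_satisfied_triple:
  assumes "\<alpha> a \<noteq> \<alpha> b" "\<alpha> a \<noteq> \<alpha> c" "\<alpha> b \<noteq> \<alpha> c"
  shows "card {x \<in> {(a, {b, c}), (b, {a, c}), (c, {a, b})}. satisfies \<alpha> x} = 1"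
proof -
  let ?T = "{(a, {b, c}), (b, {a, c}), (c, {a, b})}"
  consider "\<alpha> b < \<alpha> a \<and> \<alpha> a < \<alpha> c \<or> \<alpha> c < \<alpha> a \<and> \<alpha> a < \<alpha> b"
    | "\<alpha> a < \<alpha> b \<and> \<alpha> b < \<alpha> c \<or> \<alpha> c < \<alpha> b \<and> \<alpha> b < \<alpha> a"
    | "\<alpha> a < \<alpha> c \<and> \<alpha> c < \<alpha> b \<or> \<alpha> b < \<alpha> c \<and> \<alpha> c < \<alpha> a"
    using assms by linarith
  then have "\<exists>x. {x \<in> ?T. satisfies \<alpha> x} = {x}"
  proof cases
    case 1
    then have "{x \<in> ?T. satisfies \<alpha> x} = {(a, {b, c})}"
      by (auto simp: satisfies_Pair)
    then show ?thesis ..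
  next
    case 2
    then have "{x \<in> ?T. satisfies \<alpha> x} = {(b, {a, c})}"
      by (auto simp: satisfies_Pair)
    then show ?thesis ..
  next
    case 3
    then have "{x \<in> ?T. satisfies \<alpha> x} = {(c, {a, b})}"
      by (auto simp: satisfies_Pair)
    then show ?thesis ..
  qed
  then show ?thesis
    by auto
qed

lemma card_Diff_complete_triple:
  assumes "complete_triple C A B D" "finite C"
  shows "card C = card (C - {A, B, D}) + 3"
proof -
  have T: "{A, B, D} \<subseteq> C" and "card {A, B, D} = 3"
    using assms(1) unfolding complete_triple_def by auto
  moreover have "card {A, B, D} \<le> card C"
    using card_mono[OF assms(2) T] .
  ultimately show ?thesis
    using card_Diff_subset[OF _ T] by simp
qed

lemma card_satisfied_Diff_complete_triple:
  assumes "complete_triple C A B D" "\<forall>c\<in>C. is_constraint V c" "finite C" "inj_on \<alpha> V"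
  shows "card {c \<in> C. satisfies \<alpha> c} = card {c \<in> C - {A, B, D}. satisfies \<alpha> c} + 1"
proof -
  have T: "{A, B, D} \<subseteq> C"
    using assms(1) unfolding complete_triple_def by auto
  obtain a b c where abc: "a \<noteq> b" "a \<noteq> c" "b \<noteq> c" "{a, b, c} \<subseteq> V"
    and triple: "{A, B, D} = {(a, {b, c}), (b, {a, c}), (c, {a, b})}"
    using complete_triple_cases[OF assms(1)] assms(2) T by blast
  have "\<alpha> a \<noteq> \<alpha> b" "\<alpha> a \<noteq> \<alpha> c" "\<alpha> b \<noteq> \<alpha> c"
    using abc inj_onD[OF assms(4)] by blast+
  then have "card {c \<in> {A, B, D}. satisfies \<alpha> c} = 1"
    using triple card_satisfied_triple by simp
  moreover have "{c \<in> C. satisfies \<alpha> c} =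
      {c \<in> C - {A, B, D}. satisfies \<alpha> c} \<union> {c \<in> {A, B, D}. satisfies \<alpha> c}"
    using T by blast
  moreover have "card ({c \<in> C - {A, B, D}. satisfies \<alpha> c} \<union> {c \<in> {A, B, D}. satisfies \<alpha> c}) =
      card {c \<in> C - {A, B, D}. satisfies \<alpha> c} + card {c \<in> {A, B, D}. satisfies \<alpha> c}"
    by (rule card_Un_disjoint) (use assms(3) in auto)
  ultimately show ?thesis
    by simp
qed

lemma meets_bound_Diff_complete_triple:
  assumes "complete_triple C A B D" "\<forall>c\<in>C. is_constraint V c" "finite C" "inj_on \<alpha> V"
  shows "meets_bound \<alpha> C \<kappa> \<longleftrightarrow> meets_bound \<alpha> (C - {A, B, D}) \<kappa>"
  using card_satisfied_Diff_complete_triple[OF assms] card_Diff_complete_triple[OF assms(1,3)]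
  by (simp add: meets_bound_def field_simps)

lemma reduce_step_instance:
  assumes "finite V" "\<forall>c\<in>C. is_constraint V c" "reduce_step (V, C) (V', C')"
  shows "finite V'" "\<forall>c\<in>C'. is_constraint V' c"
proof -
  obtain A B D where V': "V' = V - {v \<in> cvars A. \<forall>c \<in> C - {A, B, D}. v \<notin> cvars c}"
    and C': "C' = C - {A, B, D}"
    using assms(3) unfolding reduce_step_def by auto
  show "finite V'"
    using assms(1) V' by simp
  show "\<forall>c\<in>C'. is_constraint V' c"
  proof
    fix c assume "c \<in> C'"
    moreover have "cvars c \<subseteq> V" if "c \<in> C" for c
      using assms(2) that cvars_subset_if_is_constraint by blast
    ultimately have "cvars c \<subseteq> V'"
      using V' C' by blast
    then show "is_constraint V' c"
      using assms(2) \<open>c \<in> C'\<close> C' is_constraint_restrict by blast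
  qed
qed

lemma batlb_yes_reduce_step_iff:
  assumes "finite V" "\<forall>c\<in>C. is_constraint V c" "reduce_step (V, C) (V', C')"
  shows "batlb_yes V C \<kappa> \<longleftrightarrow> batlb_yes V' C' \<kappa>"
proof -
  obtain A B D where triple: "complete_triple C A B D" and C': "C' = C - {A, B, D}"
    and "V' \<subseteq> V"
    using assms(3) unfolding reduce_step_def by auto
  have "finite V'" and vars': "\<forall>c\<in>C'. cvars c \<subseteq> V'"
    using reduce_step_instance[OF assms] cvars_subset_if_is_constraint by blast+
  have vars: "\<forall>c\<in>C. cvars c \<subseteq> V"
    using assms(2) cvars_subset_if_is_constraint by blast
  have "batlb_yes V C \<kappa> \<longleftrightarrow> (\<exists>\<alpha>. inj_on \<alpha> V \<and> meets_bound \<alpha> C' \<kappa>)"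
    using batlb_yes_iff_inj_on[OF assms(1) vars] C'
      meets_bound_Diff_complete_triple[OF triple assms(2) finite_constraints[OF assms(1,2)]]
    by blast
  also have "\<dots> \<longleftrightarrow> (\<exists>\<alpha>. inj_on \<alpha> V' \<and> meets_bound \<alpha> C' \<kappa>)"
  proof
    assume "\<exists>\<alpha>. inj_on \<alpha> V \<and> meets_bound \<alpha> C' \<kappa>"
    then show "\<exists>\<alpha>. inj_on \<alpha> V' \<and> meets_bound \<alpha> C' \<kappa>"
      using inj_on_subset[OF _ \<open>V' \<subseteq> V\<close>] by blast
  next
    assume "\<exists>\<alpha>. inj_on \<alpha> V' \<and> meets_bound \<alpha> C' \<kappa>"
    then obtain \<alpha> where \<alpha>: "inj_on \<alpha> V'" "meets_bound \<alpha> C' \<kappa>"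
      by blast
    obtain \<beta> where \<beta>: "inj_on \<beta> V" "\<forall>x\<in>V'. \<beta> x = \<alpha> x"
      using ex_inj_on_extension[OF assms(1) \<open>V' \<subseteq> V\<close> \<alpha>(1)] by blast
    have "satisfies \<beta> c \<longleftrightarrow> satisfies \<alpha> c" if "c \<in> C'" for c
      using \<beta>(2) vars' that by (intro satisfies_cong) (metis subsetD)
    then show "\<exists>\<beta>. inj_on \<beta> V \<and> meets_bound \<beta> C' \<kappa>"
      using \<alpha>(2) \<beta>(1) meets_bound_cong[of C' \<beta> \<alpha>] by blast
  qed
  also have "\<dots> \<longleftrightarrow> batlb_yes V' C' \<kappa>"
    using batlb_yes_iff_inj_on[OF \<open>finite V'\<close> vars'] by simp
  finally show ?thesis .
qed

text \<open>The equivalence holds after every reduction step.\<close>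

theorem lemma3:
  fixes V V' :: "'a set" and C C' :: "'a betw set" and \<kappa> :: int
  assumes "finite V"
    and "\<forall>c \<in> C. is_constraint V c"
    and "\<kappa> \<ge> 0"
    and "reduce_step\<^sup>*\<^sup>* (V, C) (V', C')"
    and "\<not> (\<exists>A B D. complete_triple C' A B D)"
  shows "batlb_yes V C \<kappa> \<longleftrightarrow> batlb_yes V' C' \<kappa>"
proof -
  have "finite (fst I) \<and> (\<forall>c\<in>snd I. is_constraint (fst I) c) \<and>
      (batlb_yes V C \<kappa> \<longleftrightarrow> batlb_yes (fst I) (snd I) \<kappa>)"
    if "reduce_step\<^sup>*\<^sup>* (V, C) I" for I
    using that
  proof (induction rule: rtranclp_induct)
    case base
    show ?case
      using assms(1,2) by simp
  next
    case (step I J)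
    then show ?case
      using reduce_step_instance[of "fst I" "snd I" "fst J" "snd J"]
        batlb_yes_reduce_step_iff[of "fst I" "snd I" "fst J" "snd J" \<kappa>]
      by simp
  qed
  from this[OF assms(4)] show ?thesis
    by simp
qed

end
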